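(* Let $A$ be a metabelian Lie $U$-algebra over a field $k$ and let $B$ be a subalgebra of $A$. Then $B$ is a $U$-algebra.
   Context: A Lie algebra is metabelian if $(a\circ b)\circ(c\circ d)=0$ identically; $\mathrm{Fit}(A)$ is the ideal generated by all elements lying in nilpotent ideals of $A$. If $\mathrm{Fit}(A)$ is abelian, choose $\{a_\alpha:\alpha\in\Lambda\}\subseteq A$ whose images form a basis of $A/\mathrm{Fit}(A)$, let $R=k[x_\alpha:\alpha\in\Lambda]$, and make $\mathrm{Fit}(A)$ an $R$-module via $b\cdot x_\alpha=b\circ a_\alpha$ (extended multiplicatively and linearly). $A$ is a $U$-algebra if $\mathrm{Fit}(A)$ is abelian and a torsion-free $R$-module. *)

theory Defs
  imports Main "HOL.Vector_Spaces" "HOL-Library.Poly_Mapping"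
begin

text \<open>A Lie algebra over a field 'k, on the whole type 'a, with scalar
multiplication sc and Lie bracket br (written a \<circ> b in the paper).\<close>

definition lie_algebra :: "('k::field \<Rightarrow> 'a::ab_group_add \<Rightarrow> 'a) \<Rightarrow> ('a \<Rightarrow> 'a \<Rightarrow> 'a) \<Rightarrow> bool" where
  "lie_algebra sc br \<longleftrightarrow> Vector_Spaces.vector_space sc \<and>
     (\<forall>x y z. br (x + y) z = br x z + br y z \<and> br x (y + z) = br x y + br x z) \<and>
     (\<forall>c x y. br (sc c x) y = sc c (br x y) \<and> br x (sc c y) = sc c (br x y)) \<and>
     (\<forall>x. br x x = 0) \<and>
     (\<forall>x y z. br x (br y z) + br y (br z x) + br z (br x y) = 0)"

definition metabelian :: "('a \<Rightarrow> 'a \<Rightarrow> 'a::ab_group_add) \<Rightarrow> 'a set \<Rightarrow> bool" where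
  "metabelian br S \<longleftrightarrow> (\<forall>a\<in>S. \<forall>b\<in>S. \<forall>c\<in>S. \<forall>d\<in>S. br (br a b) (br c d) = 0)"

definition subalgebra :: "('k::field \<Rightarrow> 'a::ab_group_add \<Rightarrow> 'a) \<Rightarrow> ('a \<Rightarrow> 'a \<Rightarrow> 'a) \<Rightarrow> 'a set \<Rightarrow> bool" where
  "subalgebra sc br S \<longleftrightarrow> module.subspace sc S \<and> (\<forall>x\<in>S. \<forall>y\<in>S. br x y \<in> S)"

definition lie_ideal :: "('k::field \<Rightarrow> 'a::ab_group_add \<Rightarrow> 'a) \<Rightarrow> ('a \<Rightarrow> 'a \<Rightarrow> 'a) \<Rightarrow> 'a set \<Rightarrow> 'a set \<Rightarrow> bool" where
  "lie_ideal sc br S I \<longleftrightarrow> module.subspace sc I \<and> I \<subseteq> S \<and> (\<forall>x\<in>I. \<forall>y\<in>S. br x y \<in> I)"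

primrec lcs :: "('k::field \<Rightarrow> 'a::ab_group_add \<Rightarrow> 'a) \<Rightarrow> ('a \<Rightarrow> 'a \<Rightarrow> 'a) \<Rightarrow> 'a set \<Rightarrow> nat \<Rightarrow> 'a set" where
  "lcs sc br I 0 = I"
| "lcs sc br I (Suc n) = module.span sc {br x y | x y. x \<in> lcs sc br I n \<and> y \<in> I}"

definition nilpotent_lie :: "('k::field \<Rightarrow> 'a::ab_group_add \<Rightarrow> 'a) \<Rightarrow> ('a \<Rightarrow> 'a \<Rightarrow> 'a) \<Rightarrow> 'a set \<Rightarrow> bool" where
  "nilpotent_lie sc br I \<longleftrightarrow> (\<exists>n. lcs sc br I n = {0})"

definition Fit :: "('k::field \<Rightarrow> 'a::ab_group_add \<Rightarrow> 'a) \<Rightarrow> ('a \<Rightarrow> 'a \<Rightarrow> 'a) \<Rightarrow> 'a set \<Rightarrow> 'a set" where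
  "Fit sc br S = \<Inter> {J. lie_ideal sc br S J \<and>
      \<Union> {I. lie_ideal sc br S I \<and> nilpotent_lie sc br I} \<subseteq> J}"

definition abelian_set :: "('a \<Rightarrow> 'a \<Rightarrow> 'a::ab_group_add) \<Rightarrow> 'a set \<Rightarrow> bool" where
  "abelian_set br I \<longleftrightarrow> (\<forall>x\<in>I. \<forall>y\<in>I. br x y = 0)"

text \<open>As \<subseteq> S is a set of representatives whose images form a basis of S/W.\<close>
definition quot_basis :: "('k::field \<Rightarrow> 'a::ab_group_add \<Rightarrow> 'a) \<Rightarrow> 'a set \<Rightarrow> 'a set \<Rightarrow> 'a set \<Rightarrow> bool" where
  "quot_basis sc S W As \<longleftrightarrow> As \<subseteq> S \<and>
     (\<forall>F c. finite F \<longrightarrow> F \<subseteq> As \<longrightarrow> (\<Sum>x\<in>F. sc (c x) x) \<in> W \<longrightarrow> (\<forall>x\<in>F. c x = 0)) \<and>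
     S \<subseteq> module.span sc (As \<union> W)"

text \<open>Polynomials over 'k in commuting variables x_a indexed by elements a of 'a:
  finitely supported maps from monomials (exponent vectors) to coefficients.
  R(As) = k[x_a : a \<in> As] is the set of polynomials involving only variables in As.\<close>
type_synonym ('a, 'k) mpoly = "('a \<Rightarrow>\<^sub>0 nat) \<Rightarrow>\<^sub>0 'k"

definition polys_in :: "'a set \<Rightarrow> ('a, 'k::zero) mpoly set" where
  "polys_in As = {p. \<forall>m \<in> Poly_Mapping.keys p. Poly_Mapping.keys m \<subseteq> As}"

definition var :: "'a \<Rightarrow> ('a, 'k::{zero,one}) mpoly" where
  "var a = Poly_Mapping.single (Poly_Mapping.single a 1) 1"

definition const :: "'k::zero \<Rightarrow> ('a, 'k) mpoly" where
  "const c = Poly_Mapping.single 0 c"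

text \<open>act is the R(As)-module structure on M = Fit(S) with b \<cdot> x_a = b \<circ> a.\<close>
definition fit_module_action ::
  "('k::field \<Rightarrow> 'a::ab_group_add \<Rightarrow> 'a) \<Rightarrow> ('a \<Rightarrow> 'a \<Rightarrow> 'a) \<Rightarrow> 'a set \<Rightarrow> 'a set
     \<Rightarrow> ('a \<Rightarrow> ('a, 'k) mpoly \<Rightarrow> 'a) \<Rightarrow> bool" where
  "fit_module_action sc br M As act \<longleftrightarrow>
     (\<forall>b\<in>M. \<forall>p\<in>polys_in As. act b p \<in> M) \<and>
     (\<forall>b\<in>M. \<forall>b'\<in>M. \<forall>p\<in>polys_in As. act (b + b') p = act b p + act b' p) \<and>
     (\<forall>b\<in>M. \<forall>p\<in>polys_in As. \<forall>q\<in>polys_in As. act b (p + q) = act b p + act b q) \<and>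
     (\<forall>b\<in>M. \<forall>p\<in>polys_in As. \<forall>q\<in>polys_in As. act b (p * q) = act (act b p) q) \<and>
     (\<forall>b\<in>M. \<forall>c. act b (const c) = sc c b) \<and>
     (\<forall>b\<in>M. \<forall>a\<in>As. act b (var a) = br b a)"

definition torsion_free_action :: "'a::ab_group_add set \<Rightarrow> 'a set \<Rightarrow> ('a \<Rightarrow> ('a, 'k::field) mpoly \<Rightarrow> 'a) \<Rightarrow> bool" where
  "torsion_free_action M As act \<longleftrightarrow>
     (\<forall>b\<in>M. \<forall>p\<in>polys_in As. b \<noteq> 0 \<longrightarrow> p \<noteq> 0 \<longrightarrow> act b p \<noteq> 0)"

definition U_algebra :: "('k::field \<Rightarrow> 'a::ab_group_add \<Rightarrow> 'a) \<Rightarrow> ('a \<Rightarrow> 'a \<Rightarrow> 'a) \<Rightarrow> 'a set \<Rightarrow> bool" where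
  "U_algebra sc br S \<longleftrightarrow> abelian_set br (Fit sc br S) \<and>
     (\<forall>As. quot_basis sc S (Fit sc br S) As \<longrightarrow>
        (\<exists>act :: 'a \<Rightarrow> ('a, 'k) mpoly \<Rightarrow> 'a.
            fit_module_action sc br (Fit sc br S) As act \<and>
            torsion_free_action (Fit sc br S) As act))"

end

theory Submission
  imports Defs
begin

text \<open>Let \<open>M = Fit(A)\<close>. Since \<open>A\<close> is metabelian, \<open>[A,A]\<close> is an abelian ideal, so \<open>[A,A] \<subseteq> M\<close>.
  Torsion-freeness applied to linear polynomials shows that \<open>y \<circ> b \<noteq> 0\<close> whenever
  \<open>0 \<noteq> y \<in> M\<close> and \<open>b \<notin> M\<close>. If every nilpotent ideal of \<open>B\<close> lies in \<open>M\<close>, then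
  \<open>Fit(B) = M \<inter> B\<close>; a basis of \<open>B\<close> modulo \<open>M \<inter> B\<close> stays independent modulo \<open>M\<close>, extends to a
  basis of \<open>A\<close> modulo \<open>M\<close>, and the module structure of \<open>M\<close> restricts to \<open>M \<inter> B\<close>.
  Otherwise some nilpotent ideal \<open>N\<close> of \<open>B\<close> contains \<open>b \<notin> M\<close>; iterating \<open>ad b\<close> shows
  \<open>N \<inter> M = 0\<close>, then \<open>B \<inter> M = 0\<close>, so \<open>B\<close> is abelian and trivially a \<open>U\<close>-algebra.\<close>

lemma nilpotent_ideal_subset_Fit:
  "lie_ideal sc br S I \<Longrightarrow> nilpotent_lie sc br I \<Longrightarrow> I \<subseteq> Fit sc br S"
  by (auto simp: Fit_def)

lemma Fit_subset:
  "lie_ideal sc br S J \<Longrightarrow> (\<And>I. lie_ideal sc br S I \<Longrightarrow> nilpotent_lie sc br I \<Longrightarrow> I \<subseteq> J)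
   \<Longrightarrow> Fit sc br S \<subseteq> J"
  unfolding Fit_def by (rule Inter_lower) blast

locale lie_alg =
  fixes sc :: "'k::field \<Rightarrow> 'a::ab_group_add \<Rightarrow> 'a" and br :: "'a \<Rightarrow> 'a \<Rightarrow> 'a"
  assumes lie_algebra: "lie_algebra sc br"
begin

sublocale vector_space sc
  using lie_algebra by (simp add: lie_algebra_def)

lemma bracket_add_left: "br (x + y) z = br x z + br y z"
  and bracket_add_right: "br x (y + z) = br x y + br x z"
  and bracket_scale_left: "br (sc c x) y = sc c (br x y)"
  and bracket_scale_right: "br x (sc c y) = sc c (br x y)"
  and bracket_self: "br x x = 0"
  using lie_algebra unfolding lie_algebra_def by blast+

lemma bracket_zero_left [simp]: "br 0 y = 0"
  using bracket_add_left[of 0 0 y] by simp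

lemma bracket_zero_right [simp]: "br y 0 = 0"
  using bracket_add_right[of y 0 0] by simp

lemma bracket_antisym: "br x y = - br y x"
proof -
  have "br x x + br x y + (br y x + br y y) = 0"
    using bracket_self[of "x + y"] by (simp add: bracket_add_left bracket_add_right ac_simps)
  then show ?thesis
    by (simp add: bracket_self eq_neg_iff_add_eq_0)
qed

lemma bracket_sum_right: "br y (sum f F) = (\<Sum>i\<in>F. br y (f i))"
  by (induct F rule: infinite_finite_induct) (auto simp: bracket_add_right)

lemma bracket_eq_0_on_span:
  assumes "\<forall>g\<in>G. \<forall>h\<in>G. br g h = 0" and "u \<in> span G" and "v \<in> span G"
  shows "br u v = 0"
proof -
  have u_G: "br u h = 0" if "h \<in> G" for h
    using \<open>u \<in> span G\<close>
    by (induct rule: span_induct_alt) (use assms(1) that in \<open>simp_all add: bracket_add_left bracket_scale_left\<close>)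
  show ?thesis
    using \<open>v \<in> span G\<close>
    by (induct rule: span_induct_alt) (simp_all add: u_G bracket_add_right bracket_scale_right)
qed

lemma nilpotent_if_abelian:
  assumes "abelian_set br I"
  shows "nilpotent_lie sc br I"
proof -
  have "span {br x y | x y. x \<in> I \<and> y \<in> I} \<subseteq> {0}"
    using assms by (intro span_minimal) (auto simp: abelian_set_def)
  then have "lcs sc br I 1 = {0}"
    using span_zero by auto
  then show ?thesis
    unfolding nilpotent_lie_def by blast
qed

lemma Fit_lie_ideal:
  assumes "subalgebra sc br S"
  shows "lie_ideal sc br S (Fit sc br S)"
proof -
  let ?F = "{J. lie_ideal sc br S J \<and> \<Union> {I. lie_ideal sc br S I \<and> nilpotent_lie sc br I} \<subseteq> J}"
  have "S \<in> ?F"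
    using assms by (auto simp: lie_ideal_def subalgebra_def)
  moreover have "subspace (\<Inter>?F)"
    by (rule subspace_Inter) (auto simp: lie_ideal_def)
  ultimately show ?thesis
    unfolding Fit_def lie_ideal_def by blast
qed

lemma bracket_in_Fit_if_metabelian:
  assumes "metabelian br UNIV"
  shows "br x y \<in> Fit sc br UNIV"
proof -
  define D where "D = span {br a b | a b. True}"
  have "lie_ideal sc br UNIV D"
    unfolding lie_ideal_def D_def by (auto intro: span_base)
  moreover have "abelian_set br D"
    unfolding abelian_set_def D_def
  proof (intro ballI)
    fix u v assume "u \<in> span {br a b | a b. True}" "v \<in> span {br a b | a b. True}"
    moreover have "\<forall>g\<in>{br a b | a b. True}. \<forall>h\<in>{br a b | a b. True}. br g h = 0"
      using assms unfolding metabelian_def by auto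
    ultimately show "br u v = 0"
      using bracket_eq_0_on_span by blast
  qed
  ultimately have "D \<subseteq> Fit sc br UNIV"
    by (intro nilpotent_ideal_subset_Fit nilpotent_if_abelian)
  moreover have "br x y \<in> D"
    unfolding D_def by (auto intro: span_base)
  ultimately show ?thesis by blast
qed

end

lemma quot_basisD:
  assumes "quot_basis sc S W As"
  shows "As \<subseteq> S"
    and "\<And>F c. finite F \<Longrightarrow> F \<subseteq> As \<Longrightarrow> (\<Sum>x\<in>F. sc (c x) x) \<in> W \<Longrightarrow> \<forall>x\<in>F. c x = 0"
    and "S \<subseteq> module.span sc (As \<union> W)"
  using assms unfolding quot_basis_def by auto

context vector_space
begin

text \<open>A set that is linearly independent modulo a subspace \<open>M\<close> extends to a basis of the whole
  space modulo \<open>M\<close>: extend it, together with a basis \<open>C\<close> of \<open>M\<close>, to a basis \<open>E\<close>, and take \<open>E - C\<close>.\<close>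

lemma quot_basis_extend:
  assumes M: "subspace M"
    and X: "\<forall>F c. finite F \<longrightarrow> F \<subseteq> X \<longrightarrow> (\<Sum>x\<in>F. scale (c x) x) \<in> M \<longrightarrow> (\<forall>x\<in>F. c x = 0)"
  obtains As where "X \<subseteq> As" and "quot_basis scale UNIV M As"
proof -
  obtain C where C: "C \<subseteq> M" "independent C" "M \<subseteq> span C"
    using maximal_independent_subset by metis
  have span_C: "span C \<subseteq> M"
    using C(1) M by (rule span_minimal)
  have "X \<inter> M = {}"
    using X[rule_format, of "{x}" "\<lambda>_. 1" for x] by auto
  have indep_XC: "independent (X \<union> C)"
    unfolding independent_explicit_finite_subsets
  proof (intro allI impI ballI)
    fix S u v assume S: "S \<subseteq> X \<union> C" "finite S" and sum_0: "(\<Sum>v\<in>S. scale (u v) v) = 0" and "v \<in> S"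
    have split: "(\<Sum>v\<in>S. scale (u v) v) = (\<Sum>v\<in>S \<inter> X. scale (u v) v) + (\<Sum>v\<in>S - X. scale (u v) v)"
      using S(2) by (rule sum.Int_Diff)
    have "(\<Sum>v\<in>S - X. scale (u v) v) \<in> M"
      using S(1) span_C by (intro subspace_sum[OF M] subspace_scale[OF M]) (auto dest: span_base)
    then have "- (\<Sum>v\<in>S - X. scale (u v) v) \<in> M"
      by (rule subspace_neg[OF M])
    moreover have "(\<Sum>v\<in>S \<inter> X. scale (u v) v) = - (\<Sum>v\<in>S - X. scale (u v) v)"
      using split sum_0 by (simp add: eq_neg_iff_add_eq_0)
    ultimately have X_part: "\<forall>x\<in>S \<inter> X. u x = 0"
      using X[rule_format, of "S \<inter> X" u] S(2) by simp
    then have "(\<Sum>v\<in>S - X. scale (u v) v) = 0"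
      using split sum_0 by simp
    then have "\<forall>x\<in>S - X. u x = 0"
      using C(2) S unfolding independent_explicit_finite_subsets by (meson Diff_subset_conv finite_Diff sup_commute)
    with X_part show "u v = 0"
      using \<open>v \<in> S\<close> by blast
  qed
  define E where "E = extend_basis (X \<union> C)"
  have E: "X \<union> C \<subseteq> E" "independent E" "span E = UNIV"
    using extend_basis_superset[OF indep_XC] independent_extend_basis[OF indep_XC]
      span_extend_basis[OF indep_XC]
    unfolding E_def by auto
  have "quot_basis scale UNIV M (E - C)"
    unfolding quot_basis_def
  proof (intro conjI allI impI)
    have "span E \<subseteq> span (E - C \<union> M)"
      using C(1) by (intro span_mono) blast
    then show "UNIV \<subseteq> span (E - C \<union> M)"
      using E(3) by simp
    fix F c assume F: "finite F" "F \<subseteq> E - C" and "(\<Sum>x\<in>F. scale (c x) x) \<in> M"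
    then have "(\<Sum>x\<in>F. scale (c x) x) \<in> span C"
      using C(3) by blast
    then obtain t r where t: "finite t" "t \<subseteq> C" and tr: "(\<Sum>x\<in>F. scale (c x) x) = (\<Sum>a\<in>t. scale (r a) a)"
      unfolding span_explicit by blast
    have disj: "F \<inter> t = {}"
      using F(2) t(2) by blast
    define w where "w v = (if v \<in> F then c v else - r v)" for v
    have "(\<Sum>v\<in>F \<union> t. scale (w v) v) = (\<Sum>v\<in>F. scale (w v) v) + (\<Sum>v\<in>t. scale (w v) v)"
      using F(1) t(1) disj by (rule sum.union_disjoint)
    also have "(\<Sum>v\<in>F. scale (w v) v) = (\<Sum>x\<in>F. scale (c x) x)"
      by (simp add: w_def)
    also have "(\<Sum>v\<in>t. scale (w v) v) = - (\<Sum>a\<in>t. scale (r a) a)"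
      using disj by (auto simp: w_def sum_negf[symmetric] intro!: sum.cong)
    finally have "(\<Sum>v\<in>F \<union> t. scale (w v) v) = 0"
      using tr by simp
    moreover have "F \<union> t \<subseteq> E" "finite (F \<union> t)"
      using F t E(1) by auto
    ultimately have "\<forall>v\<in>F \<union> t. w v = 0"
      using E(2)[unfolded independent_explicit_finite_subsets, rule_format, of "F \<union> t" w] by simp
    then show "\<forall>x\<in>F. c x = 0"
      unfolding w_def by (metis UnI1)
  qed simp
  moreover have "X \<subseteq> E - C"
    using E(1) \<open>X \<inter> M = {}\<close> C(1) by blast
  ultimately show ?thesis
    using that by blast
qed

end

lemma polys_in_add: "p \<in> polys_in X \<Longrightarrow> q \<in> polys_in X \<Longrightarrow> p + q \<in> polys_in X"
  unfolding polys_in_def using keys_add[of p q] by blast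

lemma polys_in_zero [simp]: "0 \<in> polys_in X"
  unfolding polys_in_def by simp

lemma polys_in_single: "Poly_Mapping.keys m \<subseteq> X \<Longrightarrow> Poly_Mapping.single m c \<in> polys_in X"
  unfolding polys_in_def by (cases "c = 0") auto

lemma polys_in_mono: "X \<subseteq> Y \<Longrightarrow> polys_in X \<subseteq> polys_in Y"
  unfolding polys_in_def by auto

lemma polys_in_sum: "(\<And>i. i \<in> S \<Longrightarrow> f i \<in> polys_in X) \<Longrightarrow> sum f S \<in> polys_in X"
  by (induct S rule: infinite_finite_induct) (auto intro: polys_in_add)

lemma polys_in_empty:
  assumes "p \<in> polys_in {}"
  shows "p = const (Poly_Mapping.lookup p 0)"
proof (rule poly_mapping_eqI)
  fix m
  show "Poly_Mapping.lookup p m = Poly_Mapping.lookup (const (Poly_Mapping.lookup p 0)) m"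
  proof (cases "m = 0")
    case False
    then have "m \<notin> Poly_Mapping.keys p"
      using assms unfolding polys_in_def by auto
    with False show ?thesis
      by (simp add: const_def in_keys_iff lookup_single_not_eq)
  qed (simp add: const_def)
qed

lemma poly_mapping_sum_single:
  "p = (\<Sum>m\<in>Poly_Mapping.keys p. Poly_Mapping.single m (Poly_Mapping.lookup p m))"
  by (rule poly_mapping_eqI) (simp add: lookup_sum lookup_single when_def in_keys_iff sum.delta)

lemma fit_module_actionD:
  assumes "fit_module_action sc br M As act"
  shows act_add_left: "\<And>b b' p. b \<in> M \<Longrightarrow> b' \<in> M \<Longrightarrow> p \<in> polys_in As \<Longrightarrow> act (b + b') p = act b p + act b' p"
    and act_add_right: "\<And>b p q. b \<in> M \<Longrightarrow> p \<in> polys_in As \<Longrightarrow> q \<in> polys_in As \<Longrightarrow> act b (p + q) = act b p + act b q"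
    and act_mult: "\<And>b p q. b \<in> M \<Longrightarrow> p \<in> polys_in As \<Longrightarrow> q \<in> polys_in As \<Longrightarrow> act b (p * q) = act (act b p) q"
    and act_const: "\<And>b c. b \<in> M \<Longrightarrow> act b (const c) = sc c b"
    and act_var: "\<And>b a. b \<in> M \<Longrightarrow> a \<in> As \<Longrightarrow> act b (var a) = br b a"
  using assms unfolding fit_module_action_def by blast+

lemma act_sum:
  assumes "fit_module_action sc br M As act" and "b \<in> M" and "\<And>i. i \<in> S \<Longrightarrow> f i \<in> polys_in As"
  shows "act b (sum f S) = (\<Sum>i\<in>S. act b (f i))"
  using assms(3)
proof (induct S rule: infinite_finite_induct)
  case (insert x F)
  then show ?case
    using act_add_right[OF assms(1,2)] polys_in_sum[of F f As] by simp
qed (use act_add_right[OF assms(1,2) polys_in_zero polys_in_zero] in simp_all)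

lemma fit_module_action_restrict:
  assumes A: "fit_module_action sc br M As' act" and "As \<subseteq> As'" and "T \<subseteq> M"
    and "\<And>b p. b \<in> T \<Longrightarrow> p \<in> polys_in As \<Longrightarrow> act b p \<in> T"
  shows "fit_module_action sc br T As act"
proof -
  have P: "p \<in> polys_in As'" if "p \<in> polys_in As" for p
    using polys_in_mono[OF assms(2)] that by blast
  have M: "b \<in> M" if "b \<in> T" for b
    using assms(3) that by blast
  show ?thesis
    unfolding fit_module_action_def
    using assms(2,4) act_add_left[OF A M M P] act_add_right[OF A M P P] act_mult[OF A M P P]
      act_const[OF A M] act_var[OF A M] by blast
qed

context vector_space
begin

lemma quot_basis_self_empty:
  assumes "quot_basis scale S S As" and "subspace S"
  shows "As = {}"
proof (rule ccontr)
  assume "As \<noteq> {}"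
  then obtain a where "a \<in> As" by blast
  then have "scale 1 a \<in> S"
    using quot_basisD(1)[OF assms(1)] by auto
  with \<open>a \<in> As\<close> show False
    using quot_basisD(2)[OF assms(1), of "{a}" "\<lambda>_. 1"] by simp
qed

lemma fit_module_action_scalar:
  assumes "subspace T"
  shows "fit_module_action scale br T {} (\<lambda>b p. scale (Poly_Mapping.lookup p 0) b)"
  unfolding fit_module_action_def
proof (intro conjI ballI allI)
  fix b and p q :: "('b, 'a) mpoly" assume "p \<in> polys_in {}" "q \<in> polys_in {}"
  then have "Poly_Mapping.lookup (p * q) 0 = Poly_Mapping.lookup p 0 * Poly_Mapping.lookup q 0"
    using polys_in_empty[of p] polys_in_empty[of q] by (metis const_def mult_single lookup_single_eq add_0)
  then show "scale (Poly_Mapping.lookup (p * q) 0) b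
      = scale (Poly_Mapping.lookup q 0) (scale (Poly_Mapping.lookup p 0) b)"
    by (simp add: mult.commute)
qed (auto simp: subspace_scale[OF assms] scale_right_distrib scale_left_distrib lookup_add const_def)

lemma torsion_free_action_scalar:
  "torsion_free_action T {} (\<lambda>b p. scale (Poly_Mapping.lookup p 0) b)"
  unfolding torsion_free_action_def
  by (metis (no_types, lifting) polys_in_empty const_def scale_eq_0_iff single_zero)

lemma act_in_invariant_subspace:
  assumes A: "fit_module_action scale br M As act" and "X \<subseteq> As" and "T \<subseteq> M" and T: "subspace T"
    and T_br: "\<And>b a. b \<in> T \<Longrightarrow> a \<in> X \<Longrightarrow> br b a \<in> T"
    and "b \<in> T" and "p \<in> polys_in X"
  shows "act b p \<in> T"
proof -
  \<comment> \<open>Exponent vectors are sums of unit vectors and polynomials are combinations of monomials.\<close>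
  define stable where
    "stable m \<longleftrightarrow> Poly_Mapping.keys m \<subseteq> X \<and> (\<forall>b\<in>T. act b (Poly_Mapping.single m 1) \<in> T)"
    for m :: "'b \<Rightarrow>\<^sub>0 nat"
  have in_As: "Poly_Mapping.single m c \<in> polys_in As" if "Poly_Mapping.keys m \<subseteq> X" for m c
    using that \<open>X \<subseteq> As\<close> by (intro polys_in_single) auto
  have stable_0: "stable 0"
    using act_const[OF A, of _ 1] \<open>T \<subseteq> M\<close> by (auto simp: stable_def const_def)
  have stable_add: "stable (m + m')" if "stable m" "stable m'" for m m'
  proof -
    have keys: "Poly_Mapping.keys m \<subseteq> X" "Poly_Mapping.keys m' \<subseteq> X"
      using that unfolding stable_def by blast+
    have "act b (Poly_Mapping.single (m + m') 1) \<in> T" if "b \<in> T" for b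
    proof -
      have "Poly_Mapping.single (m + m') (1::'a) = Poly_Mapping.single m 1 * Poly_Mapping.single m' 1"
        by (simp add: mult_single)
      then have "act b (Poly_Mapping.single (m + m') 1)
          = act (act b (Poly_Mapping.single m 1)) (Poly_Mapping.single m' 1)"
        using act_mult[OF A _ in_As[OF keys(1)] in_As[OF keys(2)]] \<open>b \<in> T\<close> \<open>T \<subseteq> M\<close> by auto
      then show ?thesis
        using \<open>stable m\<close> \<open>stable m'\<close> \<open>b \<in> T\<close> unfolding stable_def by simp
    qed
    moreover have "Poly_Mapping.keys (m + m') \<subseteq> X"
      using keys keys_add[of m m'] by blast
    ultimately show ?thesis
      unfolding stable_def by blast
  qed
  have stable_var: "stable (Poly_Mapping.single a k)" if "a \<in> X" for a k
  proof (induct k)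
    case (Suc k)
    have "act c (var a) \<in> T" if "c \<in> T" for c
    proof -
      have "c \<in> M" "a \<in> As"
        using that \<open>a \<in> X\<close> \<open>X \<subseteq> As\<close> \<open>T \<subseteq> M\<close> by blast+
      then show ?thesis
        using act_var[OF A] T_br[OF that \<open>a \<in> X\<close>] by simp
    qed
    then have "stable (Poly_Mapping.single a 1)"
      using \<open>a \<in> X\<close> unfolding stable_def var_def by simp
    moreover have "Poly_Mapping.single a (Suc k) = Poly_Mapping.single a 1 + Poly_Mapping.single a k"
      by (simp flip: single_add)
    ultimately show ?case
      using stable_add Suc by simp
  qed (simp add: stable_0)
  have stable_sum: "stable (\<Sum>a\<in>S. Poly_Mapping.single a (g a))" if "finite S" "S \<subseteq> X" for S g
    using that by (induct S rule: finite_induct) (simp_all add: stable_0 stable_add stable_var)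
  have stable_keys: "stable m" if "m \<in> Poly_Mapping.keys p" for m
  proof -
    have "Poly_Mapping.keys m \<subseteq> X"
      using \<open>p \<in> polys_in X\<close> that unfolding polys_in_def by blast
    then have "stable (\<Sum>a\<in>Poly_Mapping.keys m. Poly_Mapping.single a (Poly_Mapping.lookup m a))"
      by (intro stable_sum) simp_all
    then show ?thesis
      unfolding poly_mapping_sum_single[of m, symmetric] .
  qed
  have "act b p = act b (\<Sum>m\<in>Poly_Mapping.keys p. Poly_Mapping.single m (Poly_Mapping.lookup p m))"
    by (subst poly_mapping_sum_single[of p]) (rule refl)
  also have "\<dots> = (\<Sum>m\<in>Poly_Mapping.keys p. act b (Poly_Mapping.single m (Poly_Mapping.lookup p m)))"
    using \<open>b \<in> T\<close> \<open>T \<subseteq> M\<close> \<open>p \<in> polys_in X\<close>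
    by (intro act_sum[OF A] in_As) (auto simp: polys_in_def)
  also have "\<dots> \<in> T"
  proof (rule subspace_sum[OF T])
    fix m assume "m \<in> Poly_Mapping.keys p"
    then have "stable m"
      by (rule stable_keys)
    have "Poly_Mapping.single m (Poly_Mapping.lookup p m) = const (Poly_Mapping.lookup p m) * Poly_Mapping.single m 1"
      by (simp add: const_def mult_single)
    moreover have "const (Poly_Mapping.lookup p m) \<in> polys_in As"
      unfolding const_def by (simp add: polys_in_single)
    moreover have "b \<in> M"
      using \<open>b \<in> T\<close> \<open>T \<subseteq> M\<close> by blast
    ultimately have "act b (Poly_Mapping.single m (Poly_Mapping.lookup p m))
        = act (scale (Poly_Mapping.lookup p m) b) (Poly_Mapping.single m 1)"
      using act_mult[OF A _ _ in_As] act_const[OF A] \<open>stable m\<close> unfolding stable_def by simp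
    then show "act b (Poly_Mapping.single m (Poly_Mapping.lookup p m)) \<in> T"
      using \<open>stable m\<close> subspace_scale[OF T \<open>b \<in> T\<close>] unfolding stable_def by simp
  qed
  finally show ?thesis .
qed

end

lemma single_eq_single_iff_key:
  "c \<noteq> 0 \<Longrightarrow> Poly_Mapping.single a c = Poly_Mapping.single a' c \<longleftrightarrow> a = a'"
  by (metis lookup_single_eq lookup_single_not_eq)

context lie_alg
begin

lemma act_linear_monomial:
  assumes A: "fit_module_action sc br M As act" and "subspace M" and "y \<in> M" and "a \<in> As"
  shows "act y (Poly_Mapping.single (Poly_Mapping.single a 1) c) = sc c (br y a)"
proof -
  have "Poly_Mapping.single (Poly_Mapping.single a 1) c = const c * var a"
    by (simp add: const_def var_def mult_single)
  moreover have "const c \<in> polys_in As" "var a \<in> polys_in As"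
    unfolding const_def var_def using \<open>a \<in> As\<close> by (auto intro: polys_in_single)
  then have "act y (const c * var a) = act (act y (const c)) (var a)"
    by (rule act_mult[OF A \<open>y \<in> M\<close>])
  ultimately have "act y (Poly_Mapping.single (Poly_Mapping.single a 1) c) = act (sc c y) (var a)"
    using act_const[OF A \<open>y \<in> M\<close>] by simp
  also have "\<dots> = br (sc c y) a"
    using act_var[OF A subspace_scale[OF \<open>subspace M\<close> \<open>y \<in> M\<close>] \<open>a \<in> As\<close>] .
  finally show ?thesis
    by (simp add: bracket_scale_left)
qed

text \<open>Torsion-freeness for the linear polynomial \<open>\<Sum> r\<^sub>a x\<^sub>a\<close> read off from \<open>b\<close> modulo \<open>Fit\<close>.\<close>

lemma bracket_ne_0_if_not_in_Fit:
  assumes U: "U_algebra sc br UNIV" and b: "b \<notin> Fit sc br UNIV"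
    and y: "y \<in> Fit sc br UNIV" "y \<noteq> 0"
  shows "br y b \<noteq> 0"
proof -
  define M where "M = Fit sc br UNIV"
  have "subspace M"
    using Fit_lie_ideal[of UNIV] unfolding M_def subalgebra_def lie_ideal_def by simp
  obtain As where As: "quot_basis sc UNIV M As"
    using quot_basis_extend[OF \<open>subspace M\<close>, of "{}"] by auto
  then obtain act where A: "fit_module_action sc br M As act" and T: "torsion_free_action M As act"
    using U unfolding U_algebra_def M_def by blast
  have "b \<in> span (As \<union> M)"
    using quot_basisD(3)[OF As] by blast
  then obtain x m where "x \<in> span As" "m \<in> M" and b_eq: "b = x + m"
    using \<open>subspace M\<close> unfolding span_Un span_eq_iff[of M, symmetric] by auto
  then obtain F r where F: "finite F" "F \<subseteq> As" and x_eq: "x = (\<Sum>a\<in>F. sc (r a) a)"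
    unfolding span_explicit by blast
  obtain a0 where a0: "a0 \<in> F" "r a0 \<noteq> 0"
  proof (rule ccontr)
    assume "\<not> thesis"
    with that have "x = 0"
      unfolding x_eq by (metis (no_types, lifting) scale_zero_left sum.neutral)
    with b_eq \<open>m \<in> M\<close> b show False
      unfolding M_def by simp
  qed
  define p :: "('a, 'k) mpoly" where "p = (\<Sum>a\<in>F. Poly_Mapping.single (Poly_Mapping.single a 1) (r a))"
  have monomials: "Poly_Mapping.single (Poly_Mapping.single a 1) (r a) \<in> polys_in As" if "a \<in> F" for a
    using that F(2) by (intro polys_in_single) auto
  have "br y m = 0"
    using U y(1) \<open>m \<in> M\<close> unfolding U_algebra_def abelian_set_def M_def by blast
  then have "br y b = (\<Sum>a\<in>F. sc (r a) (br y a))"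
    by (simp add: b_eq x_eq bracket_add_right bracket_sum_right bracket_scale_right)
  also have "\<dots> = (\<Sum>a\<in>F. act y (Poly_Mapping.single (Poly_Mapping.single a 1) (r a)))"
    using act_linear_monomial[OF A \<open>subspace M\<close>] y(1) F(2) unfolding M_def by (auto intro!: sum.cong)
  also have "\<dots> = act y p"
    unfolding p_def using act_sum[OF A _ monomials, of y F id] y(1) unfolding M_def by simp
  finally have "br y b = act y p" .
  moreover have "Poly_Mapping.lookup p (Poly_Mapping.single a0 1) = r a0"
    unfolding p_def using a0(1) F(1)
    by (simp add: lookup_sum lookup_single when_def single_eq_single_iff_key)
  then have "p \<noteq> 0"
    using a0(2) by auto
  moreover have "p \<in> polys_in As"
    unfolding p_def by (rule polys_in_sum) (rule monomials)
  ultimately show ?thesis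
    using T y unfolding torsion_free_action_def M_def by simp
qed

lemma U_algebra_if_abelian:
  assumes "subalgebra sc br B" and "abelian_set br B"
  shows "U_algebra sc br B"
proof -
  have "subspace B"
    using assms(1) unfolding subalgebra_def by blast
  have "lie_ideal sc br B B"
    using assms(1) unfolding subalgebra_def lie_ideal_def by blast
  then have "B \<subseteq> Fit sc br B"
    using nilpotent_ideal_subset_Fit nilpotent_if_abelian[OF assms(2)] by blast
  moreover have "Fit sc br B \<subseteq> B"
    using Fit_lie_ideal[OF assms(1)] unfolding lie_ideal_def by blast
  ultimately have Fit_B: "Fit sc br B = B" by blast
  show ?thesis
    unfolding U_algebra_def Fit_B
    using assms(2) quot_basis_self_empty[OF _ \<open>subspace B\<close>]
      fit_module_action_scalar[OF \<open>subspace B\<close>] torsion_free_action_scalar by blast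
qed

lemma Fit_eq_Int_if_nilpotent_ideals_subset:
  assumes M: "lie_ideal sc br UNIV M" and "abelian_set br M" and B: "subalgebra sc br B"
    and nilpotent_in_M: "\<And>N. lie_ideal sc br B N \<Longrightarrow> nilpotent_lie sc br N \<Longrightarrow> N \<subseteq> M"
  shows "Fit sc br B = M \<inter> B"
proof
  have "subspace (M \<inter> B)"
    using M B unfolding lie_ideal_def subalgebra_def by (blast intro: subspace_inter)
  then have MB: "lie_ideal sc br B (M \<inter> B)"
    using M B unfolding lie_ideal_def subalgebra_def by blast
  moreover have "abelian_set br (M \<inter> B)"
    using assms(2) unfolding abelian_set_def by blast
  ultimately show "M \<inter> B \<subseteq> Fit sc br B"
    by (intro nilpotent_ideal_subset_Fit nilpotent_if_abelian)
  show "Fit sc br B \<subseteq> M \<inter> B"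
  proof (rule Fit_subset[OF MB])
    fix I assume "lie_ideal sc br B I" "nilpotent_lie sc br I"
    then show "I \<subseteq> M \<inter> B"
      using nilpotent_in_M unfolding lie_ideal_def by blast
  qed
qed

lemma U_algebra_subalgebra_if_Fit_eq_Int:
  assumes U: "U_algebra sc br UNIV" and B: "subalgebra sc br B"
    and Fit_B: "Fit sc br B = Fit sc br UNIV \<inter> B"
  shows "U_algebra sc br B"
  unfolding U_algebra_def
proof (intro conjI allI impI)
  define M where "M = Fit sc br UNIV"
  have M: "subspace M" "\<And>x y. x \<in> M \<Longrightarrow> br x y \<in> M"
    using Fit_lie_ideal[of UNIV] unfolding M_def subalgebra_def lie_ideal_def by simp_all
  have B': "subspace B" "\<And>x y. x \<in> B \<Longrightarrow> y \<in> B \<Longrightarrow> br x y \<in> B"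
    using B unfolding subalgebra_def by simp_all
  show "abelian_set br (Fit sc br B)"
    using U unfolding Fit_B U_algebra_def abelian_set_def by blast
  fix As assume As: "quot_basis sc B (Fit sc br B) As"
  have "As \<subseteq> B"
    using quot_basisD(1)[OF As] .
  text \<open>A combination of elements of \<open>As \<subseteq> B\<close> lies in \<open>B\<close>, so if it lies in \<open>M\<close> it lies in \<open>Fit(B)\<close>.\<close>
  have "\<forall>F c. finite F \<longrightarrow> F \<subseteq> As \<longrightarrow> (\<Sum>x\<in>F. sc (c x) x) \<in> M \<longrightarrow> (\<forall>x\<in>F. c x = 0)"
  proof (intro allI impI)
    fix F c assume "finite F" "F \<subseteq> As" "(\<Sum>x\<in>F. sc (c x) x) \<in> M"
    moreover have "(\<Sum>x\<in>F. sc (c x) x) \<in> B"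
      using \<open>F \<subseteq> As\<close> \<open>As \<subseteq> B\<close> by (intro subspace_sum[OF B'(1)] subspace_scale[OF B'(1)]) auto
    ultimately show "\<forall>x\<in>F. c x = 0"
      using quot_basisD(2)[OF As] unfolding Fit_B M_def by blast
  qed
  then obtain As' where "As \<subseteq> As'" and "quot_basis sc UNIV M As'"
    using quot_basis_extend[OF M(1)] by blast
  then obtain act where A: "fit_module_action sc br M As' act" and T: "torsion_free_action M As' act"
    using U unfolding U_algebra_def M_def by blast
  have "act b p \<in> M \<inter> B" if "b \<in> M \<inter> B" "p \<in> polys_in As" for b p
  proof (rule act_in_invariant_subspace[OF A \<open>As \<subseteq> As'\<close> _ subspace_inter[OF M(1) B'(1)] _ that])
    show "br c a \<in> M \<inter> B" if "c \<in> M \<inter> B" "a \<in> As" for c a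
      using that M(2) B'(2) \<open>As \<subseteq> B\<close> by blast
  qed blast
  then have "fit_module_action sc br (M \<inter> B) As act"
    by (intro fit_module_action_restrict[OF A \<open>As \<subseteq> As'\<close>]) auto
  moreover have "torsion_free_action (M \<inter> B) As act"
    using T polys_in_mono[OF \<open>As \<subseteq> As'\<close>] unfolding torsion_free_action_def by auto
  ultimately show "\<exists>act. fit_module_action sc br (Fit sc br B) As act \<and> torsion_free_action (Fit sc br B) As act"
    unfolding Fit_B M_def by blast
qed

text \<open>If \<open>b \<in> N \<setminus> M\<close>, then \<open>ad b\<close> is injective on \<open>M\<close> and maps \<open>lcs N n\<close> to \<open>lcs N (n+1)\<close>;
  nilpotency of \<open>N\<close> therefore forces \<open>N \<inter> M = 0\<close>, and then also \<open>B \<inter> M = 0\<close> because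
  \<open>y \<circ> b \<in> N \<inter> M\<close> for \<open>y \<in> B \<inter> M\<close>. As \<open>[B,B] \<subseteq> [A,A] \<subseteq> M\<close>, \<open>B\<close> is abelian.\<close>

lemma abelian_if_nilpotent_ideal_not_in_Fit:
  assumes "metabelian br UNIV" and U: "U_algebra sc br UNIV" and B: "subalgebra sc br B"
    and N: "lie_ideal sc br B N" "nilpotent_lie sc br N" and "\<not> N \<subseteq> Fit sc br UNIV"
  shows "abelian_set br B"
proof -
  define M where "M = Fit sc br UNIV"
  obtain b where b: "b \<in> N" "b \<notin> M"
    using assms(6) unfolding M_def by blast
  obtain n0 where n0: "lcs sc br N n0 = {0}"
    using N(2) unfolding nilpotent_lie_def by blast
  have M_ideal: "br x y \<in> M" if "x \<in> M" for x y
    using Fit_lie_ideal[of UNIV] that unfolding M_def subalgebra_def lie_ideal_def by simp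
  have N_ideal: "subspace N" "\<And>x y. x \<in> N \<Longrightarrow> y \<in> B \<Longrightarrow> br x y \<in> N" "N \<subseteq> B"
    using N(1) unfolding lie_ideal_def by blast+
  have ad_b_nonzero: "br y b \<noteq> 0" if "y \<in> M" "y \<noteq> 0" for y
    using bracket_ne_0_if_not_in_Fit[OF U] b(2) that unfolding M_def by blast
  have iterate: "((\<lambda>z. br z b) ^^ n) y \<in> (M - {0}) \<inter> lcs sc br N n" if "y \<in> (M - {0}) \<inter> N" for y n
  proof (induct n)
    case (Suc n)
    then show ?case
      using M_ideal ad_b_nonzero b(1) by (auto intro: span_base)
  qed (use that in simp)
  have N_M: "y = 0" if "y \<in> N" "y \<in> M" for y
    using iterate[of y n0] n0 that by blast
  have B_M: "y = 0" if "y \<in> B" "y \<in> M" for y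
  proof (rule ccontr)
    assume "y \<noteq> 0"
    have "br b y \<in> N"
      using N_ideal(2) b(1) \<open>y \<in> B\<close> .
    then have "br y b \<in> N"
      using subspace_neg[OF N_ideal(1)] bracket_antisym[of y b] by simp
    then show False
      using N_M M_ideal ad_b_nonzero \<open>y \<in> M\<close> \<open>y \<noteq> 0\<close> by blast
  qed
  show ?thesis
    unfolding abelian_set_def
    using B_M B bracket_in_Fit_if_metabelian[OF assms(1)] unfolding subalgebra_def M_def by blast
qed

end

theorem lemma3p2p2:
  fixes sc :: "'k::field \<Rightarrow> 'a::ab_group_add \<Rightarrow> 'a"
    and br :: "'a \<Rightarrow> 'a \<Rightarrow> 'a"
    and B :: "'a set"
  assumes "lie_algebra sc br"
    and "metabelian br UNIV"
    and "U_algebra sc br UNIV"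
    and "subalgebra sc br B"
  shows "U_algebra sc br B"
proof -
  interpret lie_alg sc br
    using assms(1) by unfold_locales
  show ?thesis
  proof (cases "\<forall>N. lie_ideal sc br B N \<and> nilpotent_lie sc br N \<longrightarrow> N \<subseteq> Fit sc br UNIV")
    case True
    have "Fit sc br B = Fit sc br UNIV \<inter> B"
    proof (rule Fit_eq_Int_if_nilpotent_ideals_subset)
      show "lie_ideal sc br UNIV (Fit sc br UNIV)"
        by (rule Fit_lie_ideal) (simp add: subalgebra_def)
      show "abelian_set br (Fit sc br UNIV)"
        using assms(3) unfolding U_algebra_def by blast
    qed (use assms(4) True in blast)+
    then show ?thesis
      using U_algebra_subalgebra_if_Fit_eq_Int assms(3,4) by blast
  next
    case False
    then show ?thesis
      using abelian_if_nilpotent_ideal_not_in_Fit[OF assms(2-4)] U_algebra_if_abelian[OF assms(4)] by blast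
  qed
qed

end
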